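(* Let $C$ be a cone in $\mathbb{R}^n$. Assume $X$ and $Y$ are nonempty closed decomposably $C$-antichain-convex subsets of $\mathbb{R}^n$, $Y$ is bounded and $X\cap Y=\emptyset$. (1) If $X$ is $C$-upward, then $X$ and $Y$ are strictly separated. (2) If $X$ is $C$-downward, then $X$ and $Y$ are strictly separated.
   Context: A cone in $\mathbb{R}^n$ is a subset $C$ with $\lambda C\subseteq C$ for all $\lambda>0$ (possibly empty, need not contain $0$). $S$ is $C$-antichain-convex iff for all $x,y\in S$ and $\lambda\in[0,1]$ with $y-x\notin C\cup(-C)$ one has $\lambda x+(1-\lambda)y\in S$; $S$ is decomposably $C$-antichain-convex iff it is a Minkowski sum of finitely many $C$-antichain-convex sets. $S$ is $C$-upward iff $S+C\subseteq S$; $C$-downward iff $S-C\subseteq S$. $X$ and $Y$ are strictly separated iff there is a linear functional $f$ on $\mathbb{R}^n$ with $\sup f[X]<\inf f[Y]$. *)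

theory Defs
  imports "HOL-Analysis.Analysis"
begin

definition is_cone :: "('a::real_vector) set \<Rightarrow> bool" where
  "is_cone C \<longleftrightarrow> (\<forall>t::real. \<forall>x\<in>C. t > 0 \<longrightarrow> t *\<^sub>R x \<in> C)"

definition antichain_convex :: "('a::real_vector) set \<Rightarrow> 'a set \<Rightarrow> bool" where
  "antichain_convex C S \<longleftrightarrow>
     (\<forall>x\<in>S. \<forall>y\<in>S. \<forall>t::real. 0 \<le> t \<and> t \<le> 1 \<and> y - x \<notin> C \<union> uminus ` C
        \<longrightarrow> t *\<^sub>R x + (1 - t) *\<^sub>R y \<in> S)"

definition minkowski_sum :: "nat \<Rightarrow> (nat \<Rightarrow> ('a::real_vector) set) \<Rightarrow> 'a set" where
  "minkowski_sum k A = {(\<Sum>i<k. x i) | x. \<forall>i<k. x i \<in> A i}"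

definition decomp_antichain_convex :: "('a::real_vector) set \<Rightarrow> 'a set \<Rightarrow> bool" where
  "decomp_antichain_convex C S \<longleftrightarrow>
     (\<exists>k A. k \<ge> 1 \<and> (\<forall>i<k. antichain_convex C (A i)) \<and> S = minkowski_sum k A)"

definition upward :: "('a::real_vector) set \<Rightarrow> 'a set \<Rightarrow> bool" where
  "upward C S \<longleftrightarrow> (\<forall>s\<in>S. \<forall>c\<in>C. s + c \<in> S)"

definition downward :: "('a::real_vector) set \<Rightarrow> 'a set \<Rightarrow> bool" where
  "downward C S \<longleftrightarrow> (\<forall>s\<in>S. \<forall>c\<in>C. s - c \<in> S)"

definition strictly_separated :: "('a::real_vector) set \<Rightarrow> 'a set \<Rightarrow> bool" where
  "strictly_separated X Y \<longleftrightarrow> (\<exists>f::'a \<Rightarrow> real. linear f \<and> (SUP x\<in>X. ereal (f x)) < (INF y\<in>Y. ereal (f y)))"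

end

theory Submission
  imports Defs
begin

text \<open>
  If b - a lies neither in C nor in -C, the segment between two points a, b of a
  C-antichain-convex set A stays in A; otherwise one endpoint lies above the other, and the
  segment lies in A + (C \<union> {0}). Summing over a decomposition S = A 1 + ... + A k, a convex
  combination of two points of S has the form s + c 1 + ... + c k with s \<in> S and every
  c i \<in> C \<union> {0}; for the cone -C it has the form s - c 1 - ... - c k instead. A C-upward set X
  absorbs these cone terms, so the difference set Y - X is convex. It is closed because Y is
  compact, and avoids 0 because X and Y are disjoint; a hyperplane strictly separating 0 from
  Y - X strictly separates X from Y. The downward case is the upward case for the cone -C.
\<close>

lemma is_cone_uminus:
  assumes "is_cone C"
  shows "is_cone (uminus ` C)"
  unfolding is_cone_def
proof (intro allI ballI impI)
  fix t :: real and x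
  assume "0 < t" "x \<in> uminus ` C"
  then obtain y where "y \<in> C" "x = - y" "t *\<^sub>R y \<in> C"
    using assms unfolding is_cone_def by blast
  then show "t *\<^sub>R x \<in> uminus ` C"
    by (simp add: image_iff)
qed

lemma is_cone_scaleR_nonneg:
  assumes "is_cone C" "c \<in> C" "0 \<le> t"
  shows "t *\<^sub>R c \<in> insert 0 C"
  using assms unfolding is_cone_def by (cases "t = 0") auto

lemma antichain_convex_uminus_cone: "antichain_convex (uminus ` C) A \<longleftrightarrow> antichain_convex C A"
proof -
  have "uminus ` C \<union> uminus ` uminus ` C = C \<union> uminus ` C"
    by (auto simp: image_image)
  then show ?thesis unfolding antichain_convex_def by simp
qed

lemma decomp_antichain_convex_uminus_cone:
  "decomp_antichain_convex (uminus ` C) S \<longleftrightarrow> decomp_antichain_convex C S"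
  unfolding decomp_antichain_convex_def antichain_convex_uminus_cone ..

lemma upward_uminus_cone: "upward (uminus ` C) X \<longleftrightarrow> downward C X"
  unfolding upward_def downward_def by auto

lemma antichain_convex_combination:
  assumes C: "is_cone C" and A: "antichain_convex C A" and a: "a \<in> A" and b: "b \<in> A"
    and t: "0 \<le> t" "t \<le> 1"
  obtains q c where "q \<in> A" "c \<in> insert 0 C" "t *\<^sub>R a + (1 - t) *\<^sub>R b = q + c"
proof -
  have above: "\<exists>c \<in> insert 0 C. t *\<^sub>R a + (1 - t) *\<^sub>R b = a + c"
    if "b - a \<in> C" "0 \<le> t" "t \<le> 1" for a b t
  proof -
    have "(1 - t) *\<^sub>R (b - a) \<in> insert 0 C"
      using is_cone_scaleR_nonneg[OF C that(1), of "1 - t"] that(3) by simp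
    moreover have "t *\<^sub>R a + (1 - t) *\<^sub>R b = a + (1 - t) *\<^sub>R (b - a)"
      by (simp add: algebra_simps)
    ultimately show ?thesis by blast
  qed
  have "a - b \<in> C" if "b - a \<in> uminus ` C"
    using that by (metis image_iff minus_diff_eq minus_minus)
  then consider "b - a \<notin> C \<union> uminus ` C" | "b - a \<in> C" | "a - b \<in> C"
    by blast
  then show ?thesis
  proof cases
    case 1
    then have "t *\<^sub>R a + (1 - t) *\<^sub>R b \<in> A"
      using A a b t unfolding antichain_convex_def by blast
    then show ?thesis by (rule that[of _ 0]) simp_all
  next
    case 2
    then obtain c where "c \<in> insert 0 C" "t *\<^sub>R a + (1 - t) *\<^sub>R b = a + c"
      using above[OF 2 t] by blast
    with a show ?thesis by (rule that)
  next
    case 3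
    have "0 \<le> 1 - t" "1 - t \<le> 1"
      using t by simp_all
    then obtain c where c: "c \<in> insert 0 C" "(1 - t) *\<^sub>R b + (1 - (1 - t)) *\<^sub>R a = b + c"
      using above[OF 3] by blast
    have "t *\<^sub>R a + (1 - t) *\<^sub>R b = b + c"
      using c(2) by (simp add: add.commute)
    with b c(1) show ?thesis by (rule that)
  qed
qed

lemma minkowski_sum_convex_combination:
  assumes C: "is_cone C" and A: "\<forall>i<k. antichain_convex C (A i)"
    and s: "s \<in> minkowski_sum k A" and s': "s' \<in> minkowski_sum k A"
    and t: "0 \<le> t" "t \<le> 1"
  obtains s\<^sub>0 c where "s\<^sub>0 \<in> minkowski_sum k A" "\<forall>i<k. c i \<in> insert 0 C"
    "t *\<^sub>R s + (1 - t) *\<^sub>R s' = s\<^sub>0 + (\<Sum>i<k. c i)"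
proof -
  obtain x x' where x: "s = (\<Sum>i<k. x i)" "\<forall>i<k. x i \<in> A i"
    and x': "s' = (\<Sum>i<k. x' i)" "\<forall>i<k. x' i \<in> A i"
    using s s' unfolding minkowski_sum_def by blast
  have "\<forall>i<k. \<exists>q c. q \<in> A i \<and> c \<in> insert 0 C \<and> t *\<^sub>R x i + (1 - t) *\<^sub>R x' i = q + c"
  proof (intro allI impI)
    fix i assume i: "i < k"
    show "\<exists>q c. q \<in> A i \<and> c \<in> insert 0 C \<and> t *\<^sub>R x i + (1 - t) *\<^sub>R x' i = q + c"
      by (rule antichain_convex_combination[OF C A[rule_format, OF i] x(2)[rule_format, OF i]
            x'(2)[rule_format, OF i] t]) blast
  qed
  then obtain q c where qc: "\<forall>i<k. q i \<in> A i \<and> c i \<in> insert 0 C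
      \<and> t *\<^sub>R x i + (1 - t) *\<^sub>R x' i = q i + c i"
    by metis
  have "t *\<^sub>R s + (1 - t) *\<^sub>R s' = (\<Sum>i<k. t *\<^sub>R x i + (1 - t) *\<^sub>R x' i)"
    by (simp add: x x' scaleR_sum_right sum.distrib)
  also have "\<dots> = (\<Sum>i<k. q i + c i)"
    using qc by (intro sum.cong) auto
  also have "\<dots> = (\<Sum>i<k. q i) + (\<Sum>i<k. c i)"
    by (rule sum.distrib)
  finally have "t *\<^sub>R s + (1 - t) *\<^sub>R s' = (\<Sum>i<k. q i) + (\<Sum>i<k. c i)" .
  moreover have "(\<Sum>i<k. q i) \<in> minkowski_sum k A"
    using qc unfolding minkowski_sum_def by blast
  moreover have "\<forall>i<k. c i \<in> insert 0 C"
    using qc by blast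
  ultimately show ?thesis
    using that by blast
qed

lemma upward_add_sum:
  assumes "upward C X" "x \<in> X" "finite I" "\<forall>i\<in>I. c i \<in> insert 0 C"
  shows "x + sum c I \<in> X"
  using assms(3,4)
proof (induction I rule: finite_induct)
  case empty
  show ?case using assms(2) by simp
next
  case (insert i I)
  then have IH: "x + sum c I \<in> X" and ci: "c i \<in> insert 0 C"
    by simp_all
  have "x + sum c I + c i \<in> X"
  proof (cases "c i = 0")
    case False
    with ci have "c i \<in> C" by simp
    with IH assms(1) show ?thesis unfolding upward_def by blast
  qed (simp add: IH)
  moreover have "sum c (insert i I) = sum c I + c i"
    using insert.hyps by (simp add: add.commute)
  ultimately show ?case by (simp add: add.assoc)
qed

lemma convex_differences_upward:
  assumes C: "is_cone C" and up: "upward C X"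
    and dX: "decomp_antichain_convex C X" and dY: "decomp_antichain_convex C Y"
  shows "convex (\<Union>y\<in>Y. \<Union>x\<in>X. {y - x})"
proof (rule convexI)
  obtain kx AX where AX: "\<forall>i<kx. antichain_convex C (AX i)" "X = minkowski_sum kx AX"
    using dX unfolding decomp_antichain_convex_def by blast
  obtain ky AY where AY: "\<forall>i<ky. antichain_convex (uminus ` C) (AY i)" "Y = minkowski_sum ky AY"
    using dY unfolding decomp_antichain_convex_def antichain_convex_uminus_cone by blast
  fix z w and u v :: real
  assume "z \<in> (\<Union>y\<in>Y. \<Union>x\<in>X. {y - x})" "w \<in> (\<Union>y\<in>Y. \<Union>x\<in>X. {y - x})"
    and u: "0 \<le> u" "0 \<le> v" "u + v = 1"
  then obtain x1 y1 x2 y2 where xy: "x1 \<in> X" "y1 \<in> Y" "z = y1 - x1" "x2 \<in> X" "y2 \<in> Y" "w = y2 - x2"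
    by blast
  obtain x0 c where x0: "x0 \<in> X" "\<forall>i<kx. c i \<in> insert 0 C"
    "u *\<^sub>R x1 + (1 - u) *\<^sub>R x2 = x0 + (\<Sum>i<kx. c i)"
    using minkowski_sum_convex_combination[OF C AX(1), of x1 x2 u] xy AX(2) u by auto
  obtain y0 d where y0: "y0 \<in> Y" "\<forall>i<ky. d i \<in> insert 0 (uminus ` C)"
    "u *\<^sub>R y1 + (1 - u) *\<^sub>R y2 = y0 + (\<Sum>i<ky. d i)"
    using minkowski_sum_convex_combination[OF is_cone_uminus[OF C] AY(1), of y1 y2 u] xy AY(2) u
    by auto
  have "x0 + (\<Sum>i<kx. c i) \<in> X"
    using upward_add_sum[OF up x0(1), of "{..<kx}" c] x0(2) by simp
  moreover have "\<forall>i\<in>{..<ky}. - d i \<in> insert 0 C"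
    using y0(2) by auto
  ultimately have x: "x0 + (\<Sum>i<kx. c i) + (\<Sum>i<ky. - d i) \<in> X"
    by (rule upward_add_sum[OF up _ finite_lessThan])
  have v: "v = 1 - u"
    using u(3) by simp
  have "u *\<^sub>R z + v *\<^sub>R w = (u *\<^sub>R y1 + (1 - u) *\<^sub>R y2) - (u *\<^sub>R x1 + (1 - u) *\<^sub>R x2)"
    unfolding xy(3,6) v by (simp add: algebra_simps)
  also have "\<dots> = y0 - (x0 + (\<Sum>i<kx. c i) + (\<Sum>i<ky. - d i))"
    using x0(3) y0(3) by (simp add: sum_negf)
  finally show "u *\<^sub>R z + v *\<^sub>R w \<in> (\<Union>y\<in>Y. \<Union>x\<in>X. {y - x})"
    using x y0(1) by blast
qed

lemma strictly_separated_if_convex_differences: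
  fixes X Y :: "'a::euclidean_space set"
  assumes "closed X" "compact Y" "Y \<noteq> {}" "X \<inter> Y = {}"
    and "convex (\<Union>y\<in>Y. \<Union>x\<in>X. {y - x})"
  shows "strictly_separated X Y"
proof -
  have "closed (\<Union>y\<in>Y. \<Union>x\<in>X. {y - x})"
    by (rule compact_closed_differences[OF assms(2,1)])
  moreover have "0 \<notin> (\<Union>y\<in>Y. \<Union>x\<in>X. {y - x})"
    using assms(4) by auto
  ultimately obtain a b where b: "0 < b" and sep: "\<forall>z \<in> (\<Union>y\<in>Y. \<Union>x\<in>X. {y - x}). b < a \<bullet> z"
    using separating_hyperplane_closed_0[OF assms(5)] by blast
  have "continuous_on Y (\<lambda>y. a \<bullet> y)"
    by (intro continuous_intros)
  then obtain y\<^sub>0 where y\<^sub>0: "y\<^sub>0 \<in> Y" "\<forall>y\<in>Y. a \<bullet> y\<^sub>0 \<le> a \<bullet> y"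
    using continuous_attains_inf[OF assms(2,3)] by blast
  have "(SUP x\<in>X. ereal (a \<bullet> x)) \<le> ereal (a \<bullet> y\<^sub>0 - b)"
  proof (rule SUP_least)
    fix x assume "x \<in> X"
    then have "y\<^sub>0 - x \<in> (\<Union>y\<in>Y. \<Union>x\<in>X. {y - x})"
      using y\<^sub>0(1) by blast
    then have "b < a \<bullet> (y\<^sub>0 - x)"
      using sep by blast
    then show "ereal (a \<bullet> x) \<le> ereal (a \<bullet> y\<^sub>0 - b)"
      by (simp add: inner_diff_right)
  qed
  also have "\<dots> < ereal (a \<bullet> y\<^sub>0)"
    using b by simp
  also have "\<dots> \<le> (INF y\<in>Y. ereal (a \<bullet> y))"
    using y\<^sub>0(2) by (intro INF_greatest) simp
  finally have "(SUP x\<in>X. ereal (a \<bullet> x)) < (INF y\<in>Y. ereal (a \<bullet> y))" .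
  moreover have "linear (\<lambda>x. a \<bullet> x)"
    by (rule bounded_linear.linear[OF bounded_linear_inner_right])
  ultimately show ?thesis
    unfolding strictly_separated_def by blast
qed

lemma strictly_separated_upward:
  fixes C X Y :: "'a::euclidean_space set"
  assumes "is_cone C" "upward C X" "closed X" "compact Y" "Y \<noteq> {}" "X \<inter> Y = {}"
    and "decomp_antichain_convex C X" "decomp_antichain_convex C Y"
  shows "strictly_separated X Y"
  by (rule strictly_separated_if_convex_differences[OF assms(3-6)
        convex_differences_upward[OF assms(1,2,7,8)]])

theorem corollary3:
  fixes C X Y :: "(real ^ 'n) set"
  assumes "is_cone C"
    and "X \<noteq> {}" and "Y \<noteq> {}" and "closed X" and "closed Y"
    and "decomp_antichain_convex C X" and "decomp_antichain_convex C Y"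
    and "bounded Y" and "X \<inter> Y = {}"
  shows "(upward C X \<longrightarrow> strictly_separated X Y) \<and> (downward C X \<longrightarrow> strictly_separated X Y)"
proof -
  have Y: "compact Y"
    using assms(5,8) by (simp add: compact_eq_bounded_closed)
  note downward_case = strictly_separated_upward[OF is_cone_uminus[OF assms(1)],
      unfolded upward_uminus_cone decomp_antichain_convex_uminus_cone]
  show ?thesis
    using strictly_separated_upward[OF assms(1) _ assms(4) Y assms(3,9,6,7)]
      downward_case[OF _ assms(4) Y assms(3,9,6,7)]
    by blast
qed

end
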